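(* Let $H$ and $E$ be Hilbert spaces, let $T:H\to H$ be a bounded linear operator with $\ker T=\{0\}$, and let $\gamma:E\to H$ be a bounded linear operator with $\ker\gamma=\{0\}$ and $\mathcal{R}(T)\cap\mathcal{R}(\gamma)=\{0\}$. Define the linear operator $A$ on $\mathcal{D}(A)=\mathcal{R}(T)\dot+\mathcal{R}(\gamma)$ by $A(Tf+\gamma\varphi)=f$ for $f\in H$, $\varphi\in E$. If $\lambda\in\mathbb{C}$ is such that $I-\lambda T$ is boundedly invertible in $H$, then \[\ker(A-\lambda I)=\mathcal{R}\big((I-\lambda T)^{-1}\gamma\big).\]
   Context: $\mathcal{R}(\cdot)$ denotes the range of an operator and $\dot+$ a direct sum of linear subspaces. The operator $A$ is well defined because of the assumptions $\ker T=\{0\}$, $\ker\gamma=\{0\}$ and $\mathcal{R}(T)\cap\mathcal{R}(\gamma)=\{0\}$. *)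

theory Defs
  imports "HOL-Analysis.Analysis"
begin

class complex_vector = real_vector +
  fixes scaleC :: "complex \<Rightarrow> 'a \<Rightarrow> 'a" (infixr \<open>*\<^sub>C\<close> 75)
  assumes scaleC_add_right: "scaleC a (x + y) = scaleC a x + scaleC a y"
    and scaleC_add_left: "scaleC (a + b) x = scaleC a x + scaleC b x"
    and scaleC_scaleC: "scaleC a (scaleC b x) = scaleC (a * b) x"
    and scaleC_one: "scaleC 1 x = x"
    and scaleC_of_real: "scaleC (of_real r) x = scaleR r x"

class complex_normed_vector = complex_vector + real_normed_vector +
  assumes norm_scaleC: "norm (scaleC a x) = cmod a * norm x"

class chilbert_space = complex_normed_vector + complete_space +
  fixes cinner :: "'a \<Rightarrow> 'a \<Rightarrow> complex"
  assumes cinner_commute: "cinner x y = cnj (cinner y x)"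
    and cinner_add_left: "cinner (x + y) z = cinner x z + cinner y z"
    and cinner_scaleC_left: "cinner (scaleC c x) y = cnj c * cinner x y"
    and cinner_ge_zero: "0 \<le> Re (cinner x x) \<and> Im (cinner x x) = 0"
    and cinner_eq_zero_iff: "cinner x x = 0 \<longleftrightarrow> x = 0"
    and norm_eq_sqrt_cinner: "norm x = sqrt (Re (cinner x x))"

definition bounded_clinear :: "('a::complex_normed_vector \<Rightarrow> 'b::complex_normed_vector) \<Rightarrow> bool" where
  "bounded_clinear F \<longleftrightarrow>
     (\<forall>x y. F (x + y) = F x + F y) \<and> (\<forall>c x. F (c *\<^sub>C x) = c *\<^sub>C F x) \<and>
     (\<exists>K. \<forall>x. norm (F x) \<le> norm x * K)"

definition boundedly_invertible :: "('a::complex_normed_vector \<Rightarrow> 'a) \<Rightarrow> bool" where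
  "boundedly_invertible F \<longleftrightarrow>
     (\<exists>G. bounded_clinear G \<and> (\<forall>x. G (F x) = x) \<and> (\<forall>x. F (G x) = x))"

definition opA_dom :: "('h::complex_vector \<Rightarrow> 'h) \<Rightarrow> ('e \<Rightarrow> 'h) \<Rightarrow> 'h set" where
  "opA_dom T \<gamma> = {T f + \<gamma> \<phi> | f \<phi>. True}"

definition opA :: "('h::complex_vector \<Rightarrow> 'h) \<Rightarrow> ('e \<Rightarrow> 'h) \<Rightarrow> 'h \<Rightarrow> 'h" where
  "opA T \<gamma> x = (THE f. \<exists>\<phi>. x = T f + \<gamma> \<phi>)"

definition opA_eigenspace :: "('h::complex_vector \<Rightarrow> 'h) \<Rightarrow> ('e \<Rightarrow> 'h) \<Rightarrow> complex \<Rightarrow> 'h set" where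
  "opA_eigenspace T \<gamma> lam = {x \<in> opA_dom T \<gamma>. opA T \<gamma> x - lam *\<^sub>C x = 0}"

end

theory Submission
  imports Defs
begin

text \<open>An element x of the domain lies in ker (A - \<lambda>I) exactly when the f in
  x = T f + \<gamma> \<phi> equals \<lambda> x, i.e. when (I - \<lambda>T) x = \<gamma> \<phi>. Hence the eigenspace is
  the preimage of R(\<gamma>) under I - \<lambda>T, which is R((I - \<lambda>T)\<inverse>\<gamma>) once I - \<lambda>T is
  invertible.\<close>

lemma bounded_clinear_additive: "bounded_clinear F \<Longrightarrow> Modules.additive F"
  unfolding bounded_clinear_def by (simp add: Modules.additive_def)

lemma bounded_clinear_scaleC: "bounded_clinear F \<Longrightarrow> F (c *\<^sub>C x) = c *\<^sub>C F x"
  unfolding bounded_clinear_def by blast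

lemma boundedly_invertible_imp_bij: "boundedly_invertible F \<Longrightarrow> bij F"
  unfolding boundedly_invertible_def by (metis bij_betw_byWitness UNIV_I image_subset_iff)

lemma opA_apply:
  assumes "Modules.additive T" and "Modules.additive \<gamma>"
    and "\<forall>f. T f = 0 \<longrightarrow> f = 0" and "range T \<inter> range \<gamma> = {0}"
  shows "opA T \<gamma> (T f + \<gamma> \<phi>) = f"
  unfolding opA_def
proof (rule the_equality)
  show "\<exists>\<phi>'. T f + \<gamma> \<phi> = T f + \<gamma> \<phi>'" by blast
next
  fix f' assume "\<exists>\<phi>'. T f + \<gamma> \<phi> = T f' + \<gamma> \<phi>'"
  then obtain \<phi>' where "T f + \<gamma> \<phi> = T f' + \<gamma> \<phi>'" by blast
  then have "T (f' - f) = \<gamma> (\<phi> - \<phi>')"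
    using assms(1,2) by (simp add: Modules.additive.diff algebra_simps)
  then have "T (f' - f) = 0"
    using assms(4) by (metis IntI rangeI singletonD)
  then show "f' = f" using assms(3) by (metis eq_iff_diff_eq_0)
qed

lemma mem_opA_eigenspace_iff:
  assumes "Modules.additive T" and "Modules.additive \<gamma>"
    and "\<forall>f. T f = 0 \<longrightarrow> f = 0" and "range T \<inter> range \<gamma> = {0}"
    and T_scaleC: "\<And>c x. T (c *\<^sub>C x) = c *\<^sub>C T x"
  shows "x \<in> opA_eigenspace T \<gamma> lam \<longleftrightarrow> (\<exists>\<phi>. x - lam *\<^sub>C T x = \<gamma> \<phi>)"
proof
  assume "x \<in> opA_eigenspace T \<gamma> lam"
  then obtain f \<phi> where x: "x = T f + \<gamma> \<phi>" and "opA T \<gamma> x = lam *\<^sub>C x"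
    unfolding opA_eigenspace_def opA_dom_def by auto
  then have "f = lam *\<^sub>C x" using opA_apply[OF assms(1-4)] by simp
  then have "x - lam *\<^sub>C T x = \<gamma> \<phi>" using x by (metis T_scaleC add_diff_cancel_left')
  then show "\<exists>\<phi>. x - lam *\<^sub>C T x = \<gamma> \<phi>" ..
next
  assume "\<exists>\<phi>. x - lam *\<^sub>C T x = \<gamma> \<phi>"
  then obtain \<phi> where "x - lam *\<^sub>C T x = \<gamma> \<phi>" ..
  then have x: "x = T (lam *\<^sub>C x) + \<gamma> \<phi>" by (simp add: T_scaleC algebra_simps)
  then have "opA T \<gamma> x = lam *\<^sub>C x" using opA_apply[OF assms(1-4)] by metis
  then show "x \<in> opA_eigenspace T \<gamma> lam"
    unfolding opA_eigenspace_def opA_dom_def using x by auto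
qed

theorem lemma1:
  fixes T :: "'h::chilbert_space \<Rightarrow> 'h" and \<gamma> :: "'e::chilbert_space \<Rightarrow> 'h" and lam :: complex
  assumes "bounded_clinear T" and "\<forall>f. T f = 0 \<longrightarrow> f = 0"
    and "bounded_clinear \<gamma>" and "\<forall>\<phi>. \<gamma> \<phi> = 0 \<longrightarrow> \<phi> = 0"
    and "range T \<inter> range \<gamma> = {0}"
    and "boundedly_invertible (\<lambda>x. x - lam *\<^sub>C T x)"
  shows "opA_eigenspace T \<gamma> lam = range (inv (\<lambda>x. x - lam *\<^sub>C T x) \<circ> \<gamma>)"
proof (rule set_eqI)
  fix x
  have bij: "bij (\<lambda>x. x - lam *\<^sub>C T x)"
    using assms(6) by (rule boundedly_invertible_imp_bij)
  have "x \<in> opA_eigenspace T \<gamma> lam \<longleftrightarrow> (\<exists>\<phi>. x - lam *\<^sub>C T x = \<gamma> \<phi>)"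
    using bounded_clinear_additive[OF assms(1)] bounded_clinear_additive[OF assms(3)] assms(2,5)
      bounded_clinear_scaleC[OF assms(1)]
    by (rule mem_opA_eigenspace_iff)
  also have "\<dots> \<longleftrightarrow> (\<exists>\<phi>. x = inv (\<lambda>x. x - lam *\<^sub>C T x) (\<gamma> \<phi>))"
    using bij_inv_eq_iff[OF bij] by simp
  also have "\<dots> \<longleftrightarrow> x \<in> range (inv (\<lambda>x. x - lam *\<^sub>C T x) \<circ> \<gamma>)"
    by auto
  finally show "x \<in> opA_eigenspace T \<gamma> lam \<longleftrightarrow> x \<in> range (inv (\<lambda>x. x - lam *\<^sub>C T x) \<circ> \<gamma>)" .
qed

end
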